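(* Let $\mathbb{D}^n\subseteq\mathbb{R}^n$ and $\mathbb{D}^m\subseteq\mathbb{R}^m$ be unbounded sets and let $f:\mathbb{D}^n\to\mathbb{D}^m$ be surjective. Let $g:\mathbb{D}^n\to\mathbb{D}^m$ be any neural network, i.e. $g=\omega\circ h_k\circ\cdots\circ h_1\circ\iota$ with a linear input layer $\iota:\mathbb{D}^n\to\mathbb{D}^{p_1}$, finitely many hidden layers $h_1,\dots,h_k$ ($h_j:\mathbb{D}^{p_j}\to\mathbb{D}^{q_j}$, the co-domain of each $h_j$ equal to the domain of $h_{j+1}$), and a linear output layer $\omega:\mathbb{D}^{q_k}\to\mathbb{D}^m$, such that $g$ has an activation bottleneck located in some hidden layer $h_i$ (the image of $h_i$ is bounded) and all layers after $h_i$ (namely $h_{i+1},\dots,h_k$ and $\omega$) are Lipschitz continuous. Then the maximum approximation error satisfies $$\varepsilon^\star_{f,g}=\sup\{\varepsilon\in\mathbb{R}^+:\exists x\in\mathbb{D}^n:\ \|f(x)-g(x)\|\ge\varepsilon\}=\infty.$$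
   Context: For each natural number $d$, $\mathbb{D}^d$ denotes a subset of $\mathbb{R}^d$; $\|\cdot\|$ is the Euclidean norm on $\mathbb{R}^m$. A hidden layer is a function $h:\mathbb{D}^p\to\mathbb{D}^q$ for natural numbers $p,q$. A neural network has an activation bottleneck if at least one of its hidden layers has bounded image; the bottleneck is said to be located in that layer. The quantity $\varepsilon^\star_{f,g}$ is called the maximum approximation error of $g$ on $f$. *)

theory Defs
  imports Complex_Main "HOL-Library.Extended_Real"
begin

text \<open>Vectors of R^d are represented as real lists of length d.\<close>

definition eucl_norm :: "real list \<Rightarrow> real" where
  "eucl_norm xs = sqrt (\<Sum>t\<leftarrow>xs. t\<^sup>2)"

definition eucl_dist :: "real list \<Rightarrow> real list \<Rightarrow> real" where
  "eucl_dist xs ys = eucl_norm (map2 (-) xs ys)"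

definition bounded_set :: "real list set \<Rightarrow> bool" where
  "bounded_set S \<longleftrightarrow> (\<exists>B. \<forall>x\<in>S. eucl_norm x \<le> B)"

definition lipschitz_on_set :: "real list set \<Rightarrow> (real list \<Rightarrow> real list) \<Rightarrow> bool" where
  "lipschitz_on_set S h \<longleftrightarrow> (\<exists>L. \<forall>x\<in>S. \<forall>y\<in>S. eucl_dist (h x) (h y) \<le> L * eucl_dist x y)"

definition linear_layer :: "nat \<Rightarrow> nat \<Rightarrow> (real list \<Rightarrow> real list) \<Rightarrow> bool" where
  "linear_layer a b \<phi> \<longleftrightarrow> (\<exists>W :: nat \<Rightarrow> nat \<Rightarrow> real.
      \<forall>x. length x = a \<longrightarrow> \<phi> x = map (\<lambda>j. \<Sum>i<a. W j i * x ! i) [0..<b])"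

text \<open>Composition h_k o ... o h_1 of the list of hidden layers [h_1,...,h_k].\<close>
definition compose_layers :: "(real list \<Rightarrow> real list) list \<Rightarrow> real list \<Rightarrow> real list" where
  "compose_layers hs x = fold (\<lambda>h y. h y) hs x"

definition max_approx_error ::
  "real list set \<Rightarrow> (real list \<Rightarrow> real list) \<Rightarrow> (real list \<Rightarrow> real list) \<Rightarrow> ereal" where
  "max_approx_error Dn f g =
     Sup (ereal ` {\<epsilon>::real. \<epsilon> > 0 \<and> (\<exists>x\<in>Dn. eucl_dist (f x) (g x) \<ge> \<epsilon>)})"

end

theory Submission
  imports Defs "HOL-Analysis.L2_Norm"
begin

text \<open>Lipschitz maps send bounded sets to bounded sets, so everything after the bottleneck
  layer, and hence the whole network, has bounded image. A surjection onto an unbounded set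
  takes arbitrarily large values, and by the triangle inequality its distance to a bounded
  function is then unbounded as well.\<close>

lemma eucl_norm_eq_L2_set: "eucl_norm x = L2_set (\<lambda>i. x ! i) {..<length x}"
  unfolding eucl_norm_def L2_set_def
  by (simp add: sum_list_sum_nth atLeast0LessThan[symmetric])

lemma eucl_dist_eq_L2_set:
  "length x = length y \<Longrightarrow> eucl_dist x y = L2_set (\<lambda>i. x ! i - y ! i) {..<length x}"
  unfolding eucl_dist_def eucl_norm_eq_L2_set by (auto intro: L2_set_cong)

lemma eucl_dist_nonneg: "eucl_dist x y \<ge> 0"
  unfolding eucl_dist_def eucl_norm_def by (intro real_sqrt_ge_zero sum_list_nonneg) auto

lemma eucl_norm_le_add_dist:
  assumes "length x = length y"
  shows "eucl_norm x \<le> eucl_norm y + eucl_dist x y"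
proof -
  have "eucl_norm x = L2_set (\<lambda>i. y ! i + (x ! i - y ! i)) {..<length x}"
    unfolding eucl_norm_eq_L2_set by simp
  also have "\<dots> \<le> L2_set (\<lambda>i. y ! i) {..<length x} + L2_set (\<lambda>i. x ! i - y ! i) {..<length x}"
    by (rule L2_set_triangle_ineq)
  also have "\<dots> = eucl_norm y + eucl_dist x y"
    using assms by (simp add: eucl_norm_eq_L2_set eucl_dist_eq_L2_set)
  finally show ?thesis .
qed

lemma eucl_dist_le_norm_add:
  assumes "length x = length y"
  shows "eucl_dist x y \<le> eucl_norm x + eucl_norm y"
proof -
  have "eucl_dist x y = L2_set (\<lambda>i. x ! i + (- y ! i)) {..<length x}"
    using assms by (simp add: eucl_dist_eq_L2_set)
  also have "\<dots> \<le> L2_set (\<lambda>i. x ! i) {..<length x} + L2_set (\<lambda>i. - y ! i) {..<length x}"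
    by (rule L2_set_triangle_ineq)
  also have "\<dots> = eucl_norm x + eucl_norm y"
    using assms by (simp add: eucl_norm_eq_L2_set L2_set_def)
  finally show ?thesis .
qed

lemma bounded_set_subset: "bounded_set T \<Longrightarrow> S \<subseteq> T \<Longrightarrow> bounded_set S"
  unfolding bounded_set_def by blast

lemma lipschitz_on_set_bounded_image:
  assumes S: "S \<subseteq> {x. length x = d}" and hS: "h ` S \<subseteq> {y. length y = e}"
    and lip: "lipschitz_on_set S h" and T: "T \<subseteq> S" and bT: "bounded_set T"
  shows "bounded_set (h ` T)"
proof (cases "T = {}")
  case True
  then show ?thesis by (simp add: bounded_set_def)
next
  case False
  then obtain x0 where x0: "x0 \<in> T" by blast
  obtain L where L: "\<forall>x\<in>S. \<forall>y\<in>S. eucl_dist (h x) (h y) \<le> L * eucl_dist x y"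
    using lip unfolding lipschitz_on_set_def by blast
  obtain B where B: "\<forall>x\<in>T. eucl_norm x \<le> B"
    using bT unfolding bounded_set_def by blast
  have "eucl_norm (h x) \<le> eucl_norm (h x0) + \<bar>L\<bar> * (B + eucl_norm x0)" if x: "x \<in> T" for x
  proof -
    have "x \<in> S" "x0 \<in> S" using x x0 T by auto
    then have len: "length (h x) = length (h x0)" "length x = length x0"
      using S hS by auto
    have "eucl_norm (h x) \<le> eucl_norm (h x0) + eucl_dist (h x) (h x0)"
      by (rule eucl_norm_le_add_dist[OF len(1)])
    also have "eucl_dist (h x) (h x0) \<le> \<bar>L\<bar> * eucl_dist x x0"
      using L \<open>x \<in> S\<close> \<open>x0 \<in> S\<close> eucl_dist_nonneg[of x x0]
      by (meson abs_ge_self mult_right_mono order_trans)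
    also have "\<dots> \<le> \<bar>L\<bar> * (eucl_norm x + eucl_norm x0)"
      by (rule mult_left_mono[OF eucl_dist_le_norm_add[OF len(2)]]) simp
    also have "\<dots> \<le> \<bar>L\<bar> * (B + eucl_norm x0)"
      using B x by (intro mult_left_mono) auto
    finally show ?thesis by simp
  qed
  then show ?thesis unfolding bounded_set_def by blast
qed

lemma compose_layers_take_Suc:
  "j < length hs \<Longrightarrow> compose_layers (take (Suc j) hs) x = (hs ! j) (compose_layers (take j hs) x)"
  unfolding compose_layers_def by (simp add: take_Suc_conv_app_nth)

locale layer_chain =
  fixes D :: "nat \<Rightarrow> real list set"
    and p q :: "nat \<Rightarrow> nat"
    and hs :: "(real list \<Rightarrow> real list) list"
  assumes D_sub: "\<And>d. D d \<subseteq> {x. length x = d}"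
    and hs_maps: "\<And>j. j < length hs \<Longrightarrow> (hs ! j) ` D (p j) \<subseteq> D (q j)"
    and hs_chain: "\<And>j. Suc j < length hs \<Longrightarrow> q j = p (Suc j)"
begin

lemma compose_take_mem:
  "j < length hs \<Longrightarrow> y \<in> D (p 0) \<Longrightarrow> compose_layers (take j hs) y \<in> D (p j)"
proof (induction j)
  case 0
  then show ?case by (simp add: compose_layers_def)
next
  case (Suc j)
  then have "(hs ! j) (compose_layers (take j hs) y) \<in> D (q j)"
    using hs_maps[of j] by auto
  then show ?case
    using Suc.prems by (simp add: compose_layers_take_Suc hs_chain)
qed

lemma compose_mem:
  assumes "hs \<noteq> []" "y \<in> D (p 0)"
  shows "compose_layers hs y \<in> D (q (length hs - 1))"
proof -
  have last: "length hs - 1 < length hs" and "Suc (length hs - 1) = length hs"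
    using assms(1) by auto
  then have "compose_layers hs y = (hs ! (length hs - 1)) (compose_layers (take (length hs - 1) hs) y)"
    using compose_layers_take_Suc[OF last, of y] by simp
  then show ?thesis
    using hs_maps[OF last] compose_take_mem[OF last assms(2)] by auto
qed

lemma compose_bounded_after_bottleneck:
  assumes i: "i < length hs"
    and bottleneck: "bounded_set ((hs ! i) ` D (p i))"
    and lip_after: "\<And>j. i < j \<Longrightarrow> j < length hs \<Longrightarrow> lipschitz_on_set (D (p j)) (hs ! j)"
  shows "bounded_set (compose_layers hs ` D (p 0))"
proof -
  let ?C = "\<lambda>j. compose_layers (take j hs) ` D (p 0)"
  have "bounded_set (?C j)" if "Suc i \<le> j" "j \<le> length hs" for j
    using that
  proof (induction j rule: dec_induct)
    case base
    have "?C (Suc i) \<subseteq> (hs ! i) ` D (p i)"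
      using compose_take_mem i by (auto simp: compose_layers_take_Suc)
    then show ?case using bottleneck bounded_set_subset by blast
  next
    case (step j)
    then have j: "i < j" "j < length hs" by auto
    have C_Suc: "?C (Suc j) = (hs ! j) ` ?C j"
      using j by (auto simp: compose_layers_take_Suc image_image)
    have C_sub: "?C j \<subseteq> D (p j)"
      using compose_take_mem j by auto
    have C_bounded: "bounded_set (?C j)"
      using step.IH j by simp
    have hs_len: "(hs ! j) ` D (p j) \<subseteq> {y. length y = q j}"
      using hs_maps[OF j(2)] D_sub by blast
    show ?case
      unfolding C_Suc
      by (rule lipschitz_on_set_bounded_image[OF D_sub hs_len lip_after[OF j] C_sub C_bounded])
  qed
  from this[of "length hs"] show ?thesis using i by simp
qed

end

lemma max_approx_error_eq_infinity:
  assumes unbounded: "\<not> bounded_set (f ` S)" and bounded: "bounded_set (g ` S)"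
    and len: "\<And>x. x \<in> S \<Longrightarrow> length (f x) = length (g x)"
  shows "max_approx_error S f g = \<infinity>"
  unfolding max_approx_error_def
proof (rule SUP_PInfty)
  fix N :: nat
  obtain B where B: "\<forall>x\<in>S. eucl_norm (g x) \<le> B"
    using bounded unfolding bounded_set_def by blast
  have "\<exists>y\<in>f ` S. eucl_norm y > real N + B + 1"
    using unbounded unfolding bounded_set_def by (meson not_le)
  then obtain x where x: "x \<in> S" "eucl_norm (f x) > real N + B + 1"
    by blast
  have "eucl_norm (f x) \<le> eucl_norm (g x) + eucl_dist (f x) (g x)"
    using eucl_norm_le_add_dist len x(1) by blast
  moreover have "eucl_norm (g x) \<le> B"
    using B x(1) by blast
  ultimately have "eucl_dist (f x) (g x) > real N"
    using x(2) by linarith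
  then show "\<exists>\<epsilon>\<in>{\<epsilon>. \<epsilon> > 0 \<and> (\<exists>x\<in>S. eucl_dist (f x) (g x) \<ge> \<epsilon>)}. ereal (real N) \<le> ereal \<epsilon>"
    using x(1) by (intro bexI[of _ "eucl_dist (f x) (g x)"]) auto
qed

theorem theorem4:
  fixes D :: "nat \<Rightarrow> real list set"
    and n m k i :: nat
    and p q :: "nat \<Rightarrow> nat"
    and f \<iota> \<omega> :: "real list \<Rightarrow> real list"
    and hs :: "(real list \<Rightarrow> real list) list"
  assumes D_sub: "\<And>d. D d \<subseteq> {x. length x = d}"
    and unb_n: "\<not> bounded_set (D n)"
    and unb_m: "\<not> bounded_set (D m)"
    and f_surj: "f ` D n = D m"
    and iota_lin: "linear_layer n (p 0) \<iota>"
    and iota_maps: "\<iota> ` D n \<subseteq> D (p 0)"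
    and len_hs: "length hs = k"
    and hs_maps: "\<And>j. j < k \<Longrightarrow> (hs ! j) ` D (p j) \<subseteq> D (q j)"
    and hs_chain: "\<And>j. Suc j < k \<Longrightarrow> q j = p (Suc j)"
    and omega_lin: "linear_layer (q (k - 1)) m \<omega>"
    and omega_maps: "\<omega> ` D (q (k - 1)) \<subseteq> D m"
    and i_lt: "i < k"
    and bottleneck: "bounded_set ((hs ! i) ` D (p i))"
    and lip_after: "\<And>j. i < j \<Longrightarrow> j < k \<Longrightarrow> lipschitz_on_set (D (p j)) (hs ! j)"
    and lip_omega: "lipschitz_on_set (D (q (k - 1))) \<omega>"
  shows "max_approx_error (D n) f (\<lambda>x. \<omega> (compose_layers hs (\<iota> x))) = \<infinity>"
proof (rule max_approx_error_eq_infinity)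
  interpret layer_chain D p q hs
    by unfold_locales (use D_sub hs_maps hs_chain len_hs in simp_all)
  let ?g = "\<lambda>x. \<omega> (compose_layers hs (\<iota> x))"
  let ?H = "compose_layers hs ` D (p 0)"
  have "hs \<noteq> []"
    using i_lt len_hs by auto
  then have H_sub: "?H \<subseteq> D (q (k - 1))"
    using compose_mem len_hs by auto
  have H_bounded: "bounded_set ?H"
    using compose_bounded_after_bottleneck[of i] bottleneck lip_after i_lt len_hs by simp
  have omega_len: "\<omega> ` D (q (k - 1)) \<subseteq> {y. length y = m}"
    using omega_maps D_sub[of m] by (rule subset_trans)
  have g_sub: "?g ` D n \<subseteq> \<omega> ` ?H"
    using iota_maps by auto
  have "bounded_set (\<omega> ` ?H)"
    by (rule lipschitz_on_set_bounded_image[OF D_sub omega_len lip_omega H_sub H_bounded])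
  then show "bounded_set (?g ` D n)"
    using g_sub by (rule bounded_set_subset)
  show "\<not> bounded_set (f ` D n)"
    using f_surj unb_m by simp
  show "length (f x) = length (?g x)" if "x \<in> D n" for x
  proof -
    have "?g x \<in> \<omega> ` D (q (k - 1))"
      using g_sub H_sub that by blast
    then have "length (?g x) = m"
      using omega_len by blast
    moreover have "length (f x) = m"
      using f_surj that D_sub[of m] by blast
    ultimately show ?thesis by simp
  qed
qed

end
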